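(* For every polynomial $f(\mathbf{x}) \in \mathbb{C}[x_1,\ldots,x_n]$ of degree $d$, we have $\mathrm{commRO}(f) \leq (d+1)^2 \cdot \mathrm{DPD}(f)$.
   Context: For $f \in \mathbb{C}[x_1,\ldots,x_n]$, the dimension of partial derivatives is $\mathrm{DPD}(f) := \dim_{\mathbb{C}} \mathrm{span}_{\mathbb{C}}\{\partial_{\mathbf{e}} f : \mathbf{e} \in \mathbb{N}^n\}$, where $\partial_{\mathbf{e}} f$ is the partial derivative of $f$ with respect to the monomial $x_1^{e_1}\cdots x_n^{e_n}$ (so $\mathbf{e}=\mathbf{0}$ gives $f$ itself). A read-once oblivious ABP (ROABP) of width $w$ computing an $n$-variate polynomial $f$ of individual degree at most $d$ consists of a permutation $\sigma$ of $[n]$, matrices $A_{j,k} \in \mathbb{C}^{w\times w}$ for $j\in[n]$, $0\le k\le d$, and vectors $\mathbf{u},\mathbf{v}\in\mathbb{C}^w$ such that $f(\mathbf{x}) = \mathbf{u}^{T} M_{\sigma(1)}(x_{\sigma(1)}) \cdots M_{\sigma(n)}(x_{\sigma(n)}) \mathbf{v}$, where $M_j(x_j) = \sum_{k=0}^{d} A_{j,k} x_j^k$. The $A_{j,k}$ are its coefficient matrices. A commutative ROABP is an ROABP whose coefficient matrices all pairwise commute. $\mathrm{commRO}(f)$ denotes the smallest $w$ such that some width-$w$ commutative ROABP computes $f$. *)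

theory Defs
  imports Complex_Main "HOL-Library.Function_Algebras" "Jordan_Normal_Form.Matrix"
begin

text \<open>An n-variate polynomial over the complex numbers is represented by its coefficient
  function c, mapping an exponent vector e (a function nat to nat; only indices below n
  are relevant) to the coefficient of the monomial x_0^(e 0) ... x_(n-1)^(e (n-1)).\<close>

definition is_mpoly :: "nat \<Rightarrow> ((nat \<Rightarrow> nat) \<Rightarrow> complex) \<Rightarrow> bool" where
  "is_mpoly n c \<longleftrightarrow> finite {e. c e \<noteq> 0} \<and> (\<forall>e. c e \<noteq> 0 \<longrightarrow> (\<forall>i\<ge>n. e i = 0))"

definition mpoly_eval :: "nat \<Rightarrow> ((nat \<Rightarrow> nat) \<Rightarrow> complex) \<Rightarrow> (nat \<Rightarrow> complex) \<Rightarrow> complex" where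
  "mpoly_eval n c x = (\<Sum>e\<in>{e. c e \<noteq> 0}. c e * (\<Prod>i<n. x i ^ e i))"

text \<open>Total degree (the zero polynomial gets degree 0).\<close>
definition total_degree :: "nat \<Rightarrow> ((nat \<Rightarrow> nat) \<Rightarrow> complex) \<Rightarrow> nat" where
  "total_degree n c = Max (insert 0 {(\<Sum>i<n. e i) | e. c e \<noteq> 0})"

text \<open>Partial derivative with respect to the monomial x^e: the coefficient of x^m in
  the derivative is c (m + e) times prod_i (m_i + e_i)! / m_i!.\<close>
definition mpoly_partial :: "nat \<Rightarrow> (nat \<Rightarrow> nat) \<Rightarrow> ((nat \<Rightarrow> nat) \<Rightarrow> complex) \<Rightarrow> ((nat \<Rightarrow> nat) \<Rightarrow> complex)" where
  "mpoly_partial n e c = (\<lambda>m. c (\<lambda>i. m i + e i) *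
      (\<Prod>i<n. of_nat (fact (m i + e i)) / of_nat (fact (m i))))"

definition cscale :: "complex \<Rightarrow> ((nat \<Rightarrow> nat) \<Rightarrow> complex) \<Rightarrow> ((nat \<Rightarrow> nat) \<Rightarrow> complex)" where
  "cscale a c = (\<lambda>m. a * c m)"

definition DPD :: "nat \<Rightarrow> ((nat \<Rightarrow> nat) \<Rightarrow> complex) \<Rightarrow> nat" where
  "DPD n c = vector_space.dim cscale
     {mpoly_partial n e c | e. \<forall>i\<ge>n. e i = 0}"

definition roabp_layer :: "nat \<Rightarrow> nat \<Rightarrow> (nat \<Rightarrow> nat \<Rightarrow> complex mat) \<Rightarrow> nat \<Rightarrow> complex \<Rightarrow> complex mat" where
  "roabp_layer w D A j t = mat w w (\<lambda>(a, b). \<Sum>k\<le>D. (A j k $$ (a, b)) * t ^ k)"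

definition roabp_value :: "nat \<Rightarrow> nat \<Rightarrow> nat \<Rightarrow> (nat \<Rightarrow> nat) \<Rightarrow> (nat \<Rightarrow> nat \<Rightarrow> complex mat)
     \<Rightarrow> complex vec \<Rightarrow> complex vec \<Rightarrow> (nat \<Rightarrow> complex) \<Rightarrow> complex" where
  "roabp_value n w D \<sigma> A u v x =
     u \<bullet> (foldr (*) [roabp_layer w D A (\<sigma> i) (x (\<sigma> i)). i \<leftarrow> [0..<n]] (1\<^sub>m w) *\<^sub>v v)"

definition comm_roabp_computes :: "nat \<Rightarrow> nat \<Rightarrow> ((nat \<Rightarrow> nat) \<Rightarrow> complex) \<Rightarrow> bool" where
  "comm_roabp_computes n w c \<longleftrightarrow>
     (\<exists>D \<sigma> A u v.
        \<sigma> permutes {0..<n} \<and>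
        (\<forall>j<n. \<forall>k\<le>D. A j k \<in> carrier_mat w w) \<and>
        u \<in> carrier_vec w \<and> v \<in> carrier_vec w \<and>
        (\<forall>j<n. \<forall>k\<le>D. \<forall>j'<n. \<forall>k'\<le>D. A j k * A j' k' = A j' k' * A j k) \<and>
        (\<forall>x. mpoly_eval n c x = roabp_value n w D \<sigma> A u v x))"

definition commRO :: "nat \<Rightarrow> ((nat \<Rightarrow> nat) \<Rightarrow> complex) \<Rightarrow> nat" where
  "commRO n c = (LEAST w. comm_roabp_computes n w c)"

end

theory Submission
  imports Defs
begin

text \<open>Let \<open>V\<close> be the span of all partial derivatives of \<open>f\<close>, so \<open>dim V = DPD(f)\<close>, and let \<open>D\<close> be
  the degree of \<open>f\<close>. The Hasse derivatives \<open>(1/k!) \<partial>\<^sup>k/\<partial>x\<^sub>j\<^sup>k\<close> map \<open>V\<close> into itself and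
  commute with each other. On polynomials of individual degree at most \<open>D\<close> the truncated Taylor
  operator \<open>T\<^sub>j(t) = \<Sum>\<^sub>k\<^sub>\<le>\<^sub>D t\<^sup>k (1/k!) \<partial>\<^sup>k/\<partial>x\<^sub>j\<^sup>k\<close> substitutes \<open>x\<^sub>j + t\<close> for \<open>x\<^sub>j\<close>, so \<open>f(x)\<close> is the
  constant coefficient of \<open>T\<^sub>1(x\<^sub>1) \<cdots> T\<^sub>n(x\<^sub>n) f\<close>. Writing the Hasse derivatives as matrices in a
  basis of \<open>V\<close> and reading off the constant coefficient by a linear functional yields a
  commutative ROABP of width \<open>dim V = DPD(f)\<close>.\<close>

section \<open>Coordinates and matrices with respect to an enumerated basis\<close>

lemma vector_space_mult: "vector_space ((*) :: 'a::field \<Rightarrow> 'a \<Rightarrow> 'a)"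
  by unfold_locales (simp_all add: algebra_simps)

locale enumerated_basis = vector_space scale
  for scale :: "'a::field \<Rightarrow> 'v::ab_group_add \<Rightarrow> 'v" +
  fixes B :: "'v set" and \<phi> :: "nat \<Rightarrow> 'v" and s :: nat
  assumes independent_basis: "independent B"
    and bij_enum: "bij_betw \<phi> {0..<s} B"
begin

definition coord :: "'v \<Rightarrow> 'a vec" where
  "coord v = vec s (\<lambda>a. representation B v (\<phi> a))"

definition matrix_of :: "('v \<Rightarrow> 'v) \<Rightarrow> 'a mat" where
  "matrix_of L = mat s s (\<lambda>(a, c). coord (L (\<phi> c)) $ a)"

lemma enum_in_span: "c < s \<Longrightarrow> \<phi> c \<in> span B"
  using bij_enum span_base by (auto simp: bij_betw_def)

lemma coord_carrier [simp]: "coord v \<in> carrier_vec s"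
  by (simp add: coord_def)

lemma dim_coord [simp]: "dim_vec (coord v) = s"
  by (simp add: coord_def)

lemma index_coord [simp]: "a < s \<Longrightarrow> coord v $ a = representation B v (\<phi> a)"
  by (simp add: coord_def)

lemma matrix_of_carrier [simp]: "matrix_of L \<in> carrier_mat s s"
  by (simp add: matrix_of_def)

lemma index_coord_sum_scale:
  assumes "\<And>i. i \<in> I \<Longrightarrow> v i \<in> span B" and "a < s"
  shows "coord (\<Sum>i\<in>I. scale (t i) (v i)) $ a = (\<Sum>i\<in>I. t i * coord (v i) $ a)"
  using assms representation_sum[OF independent_basis, of I "\<lambda>i. scale (t i) (v i)"]
  by (simp add: representation_scale[OF independent_basis] span_scale)

lemma sum_coord_scale_enum:
  assumes "v \<in> span B"
  shows "(\<Sum>c\<in>{0..<s}. scale (coord v $ c) (\<phi> c)) = v"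
proof -
  have "(\<Sum>c\<in>{0..<s}. scale (coord v $ c) (\<phi> c)) = (\<Sum>c\<in>{0..<s}. scale (representation B v (\<phi> c)) (\<phi> c))"
    by (rule sum.cong) simp_all
  also have "\<dots> = (\<Sum>b\<in>B. scale (representation B v b) b)"
    by (rule sum.reindex_bij_betw[OF bij_enum])
  also have "\<dots> = v"
    using bij_betw_finite[THEN iffD1, OF bij_enum]
    by (intro sum_representation_eq[OF independent_basis assms]) auto
  finally show ?thesis .
qed

lemma matrix_of_mult_coord:
  assumes "Vector_Spaces.linear scale scale L" and "L ` span B \<subseteq> span B" and "v \<in> span B"
  shows "matrix_of L *\<^sub>v coord v = coord (L v)"
proof (rule eq_vecI)
  interpret L: Vector_Spaces.linear scale scale L by fact
  fix a assume "a < dim_vec (coord (L v))"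
  then have a: "a < s" by simp
  have "(matrix_of L *\<^sub>v coord v) $ a = (\<Sum>c\<in>{0..<s}. coord v $ c * coord (L (\<phi> c)) $ a)"
    using a by (simp add: matrix_of_def scalar_prod_def mult.commute)
  also have "\<dots> = coord (\<Sum>c\<in>{0..<s}. scale (coord v $ c) (L (\<phi> c))) $ a"
    using assms(2) a by (subst index_coord_sum_scale) (auto intro: enum_in_span)
  also have "(\<Sum>c\<in>{0..<s}. scale (coord v $ c) (L (\<phi> c))) = L (\<Sum>c\<in>{0..<s}. scale (coord v $ c) (\<phi> c))"
    by (simp add: L.sum L.scale)
  also have "\<dots> = L v"
    by (simp only: sum_coord_scale_enum[OF assms(3)])
  finally show "(matrix_of L *\<^sub>v coord v) $ a = coord (L v) $ a" .
qed (simp add: matrix_of_def)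

lemma matrix_of_comp:
  assumes "Vector_Spaces.linear scale scale L" and "L ` span B \<subseteq> span B" and "L' ` span B \<subseteq> span B"
  shows "matrix_of L * matrix_of L' = matrix_of (L \<circ> L')"
proof (rule eq_matI)
  fix a c assume "a < dim_row (matrix_of (L \<circ> L'))" "c < dim_col (matrix_of (L \<circ> L'))"
  then have a: "a < s" and c: "c < s" by (auto simp: matrix_of_def)
  have "col (matrix_of L') c = coord (L' (\<phi> c))"
    using c by (intro eq_vecI) (auto simp: matrix_of_def)
  then have "(matrix_of L * matrix_of L') $$ (a, c) = (matrix_of L *\<^sub>v coord (L' (\<phi> c))) $ a"
    using a c by (simp add: matrix_of_def)
  also have "\<dots> = coord (L (L' (\<phi> c))) $ a"
    using assms c by (subst matrix_of_mult_coord) (auto intro: enum_in_span)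
  finally show "(matrix_of L * matrix_of L') $$ (a, c) = matrix_of (L \<circ> L') $$ (a, c)"
    using a c by (simp add: matrix_of_def)
qed (simp_all add: matrix_of_def)

lemma matrix_of_lincomb:
  assumes "\<And>k. k \<in> K \<Longrightarrow> L k ` span B \<subseteq> span B"
  shows "mat s s (\<lambda>(a, c). \<Sum>k\<in>K. matrix_of (L k) $$ (a, c) * t k)
    = matrix_of (\<lambda>v. \<Sum>k\<in>K. scale (t k) (L k v))"
proof (rule eq_matI)
  fix a c assume "a < dim_row (matrix_of (\<lambda>v. \<Sum>k\<in>K. scale (t k) (L k v)))"
    "c < dim_col (matrix_of (\<lambda>v. \<Sum>k\<in>K. scale (t k) (L k v)))"
  then have a: "a < s" and c: "c < s" by (auto simp: matrix_of_def)
  have "coord (\<Sum>k\<in>K. scale (t k) (L k (\<phi> c))) $ a = (\<Sum>k\<in>K. t k * coord (L k (\<phi> c)) $ a)"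
    using assms enum_in_span[OF c] a by (intro index_coord_sum_scale) auto
  then show "mat s s (\<lambda>(a, c). \<Sum>k\<in>K. matrix_of (L k) $$ (a, c) * t k) $$ (a, c)
    = matrix_of (\<lambda>v. \<Sum>k\<in>K. scale (t k) (L k v)) $$ (a, c)"
    using a c by (simp add: matrix_of_def mult.commute)
qed (simp_all add: matrix_of_def)

lemma foldr_in_span:
  assumes "\<And>j. j \<in> set js \<Longrightarrow> L j ` span B \<subseteq> span B" and "v \<in> span B"
  shows "foldr L js v \<in> span B"
  using assms by (induction js) auto

lemma matrix_of_foldr_mult_coord:
  assumes "\<And>j. j \<in> set js \<Longrightarrow> Vector_Spaces.linear scale scale (L j)"
    and "\<And>j. j \<in> set js \<Longrightarrow> L j ` span B \<subseteq> span B"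
    and "v \<in> span B"
  shows "foldr (*) (map (\<lambda>j. matrix_of (L j)) js) (1\<^sub>m s) *\<^sub>v coord v = coord (foldr L js v)"
  using assms
proof (induction js)
  case (Cons j js)
  let ?M = "foldr (*) (map (\<lambda>j. matrix_of (L j)) js) (1\<^sub>m s)"
  have "?M \<in> carrier_mat s s"
    by (induction js) (auto intro!: mult_carrier_mat)
  moreover have "foldr L js v \<in> span B"
    using Cons.prems by (intro foldr_in_span) auto
  ultimately show ?case
    using Cons by (simp add: assoc_mult_mat_vec[of _ s s _ s] matrix_of_mult_coord)
qed simp

lemma scalar_prod_coord:
  assumes "Vector_Spaces.linear scale (*) \<psi>" and "v \<in> span B"
  shows "vec s (\<lambda>a. \<psi> (\<phi> a)) \<bullet> coord v = \<psi> v"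
proof -
  interpret \<psi>: Vector_Spaces.linear scale "(*)" \<psi> by fact
  have "vec s (\<lambda>a. \<psi> (\<phi> a)) \<bullet> coord v = (\<Sum>c\<in>{0..<s}. \<psi> (scale (coord v $ c) (\<phi> c)))"
    by (simp add: scalar_prod_def \<psi>.scale mult.commute)
  also have "\<dots> = \<psi> v"
    using sum_coord_scale_enum[OF assms(2)] by (simp add: \<psi>.sum[symmetric])
  finally show ?thesis .
qed

end

section \<open>Partial derivatives of coefficient functions\<close>

interpretation cs: vector_space cscale
  by unfold_locales (auto simp: cscale_def algebra_simps)

lemma cscale_apply [simp]: "cscale a g m = a * g m"
  by (simp add: cscale_def)

lemma sum_fun_apply: "sum g A x = (\<Sum>a\<in>A. g a x)"
  by (induction A rule: infinite_finite_induct) auto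

lemma linear_mpoly_partial: "Vector_Spaces.linear cscale cscale (mpoly_partial n e)"
  unfolding Vector_Spaces.linear_iff
  by (auto simp: cs.vector_space_axioms mpoly_partial_def cscale_def algebra_simps)

lemma mpoly_partial_zero_exp [simp]: "mpoly_partial n (\<lambda>_. 0) g = g"
  by (simp add: mpoly_partial_def)

lemma mpoly_partial_mpoly_partial:
  "mpoly_partial n e (mpoly_partial n e' g) = mpoly_partial n (\<lambda>i. e i + e' i) g"
proof (rule ext)
  fix m
  have "(\<Prod>i<n. of_nat (fact (m i + (e i + e' i))) / of_nat (fact (m i)) :: complex)
      = (\<Prod>i<n. of_nat (fact (m i + e i + e' i)) / of_nat (fact (m i + e i)))
        * (\<Prod>i<n. of_nat (fact (m i + e i)) / of_nat (fact (m i)))"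
    by (simp add: prod.distrib[symmetric] add.assoc)
  then show "mpoly_partial n e (mpoly_partial n e' g) m = mpoly_partial n (\<lambda>i. e i + e' i) g m"
    by (simp add: mpoly_partial_def add.assoc)
qed

lemma mpoly_partial_ne_zeroD: "mpoly_partial n e g m \<noteq> 0 \<Longrightarrow> g (\<lambda>i. m i + e i) \<noteq> 0"
  by (auto simp: mpoly_partial_def)

lemma finite_support_mpoly_partial:
  assumes "finite {m. g m \<noteq> 0}"
  shows "finite {m. mpoly_partial n e g m \<noteq> 0}"
proof (rule finite_subset)
  show "{m. mpoly_partial n e g m \<noteq> 0} \<subseteq> (\<lambda>m i. m i - e i) ` {m. g m \<noteq> 0}"
    by (auto dest!: mpoly_partial_ne_zeroD intro!: image_eqI[where x = "\<lambda>i. _ i + e i"])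
qed (use assms in simp)

definition mpolys_indiv_deg_le :: "nat \<Rightarrow> nat \<Rightarrow> ((nat \<Rightarrow> nat) \<Rightarrow> complex) set" where
  "mpolys_indiv_deg_le n D = {g. is_mpoly n g \<and> (\<forall>e. g e \<noteq> 0 \<longrightarrow> (\<forall>i. e i \<le> D))}"

lemma subspace_mpolys_indiv_deg_le: "cs.subspace (mpolys_indiv_deg_le n D)"
  unfolding cs.subspace_def
proof (intro conjI ballI allI)
  show "0 \<in> mpolys_indiv_deg_le n D"
    by (simp add: mpolys_indiv_deg_le_def is_mpoly_def)
next
  fix g h assume "g \<in> mpolys_indiv_deg_le n D" "h \<in> mpolys_indiv_deg_le n D"
  moreover have "{e. (g + h) e \<noteq> 0} \<subseteq> {e. g e \<noteq> 0} \<union> {e. h e \<noteq> 0}"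
    by auto
  ultimately show "g + h \<in> mpolys_indiv_deg_le n D"
    unfolding mpolys_indiv_deg_le_def is_mpoly_def
    by (auto intro: finite_subset)
next
  fix c g assume "g \<in> mpolys_indiv_deg_le n D"
  moreover have "{e. cscale c g e \<noteq> 0} \<subseteq> {e. g e \<noteq> 0}"
    by auto
  ultimately show "cscale c g \<in> mpolys_indiv_deg_le n D"
    unfolding mpolys_indiv_deg_le_def is_mpoly_def by (auto intro: finite_subset)
qed

lemma mpoly_partial_in_mpolys_indiv_deg_le:
  assumes "g \<in> mpolys_indiv_deg_le n D"
  shows "mpoly_partial n e g \<in> mpolys_indiv_deg_le n D"
proof -
  have "(\<forall>i\<ge>n. m i = 0) \<and> (\<forall>i. m i \<le> D)" if "mpoly_partial n e g m \<noteq> 0" for m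
  proof -
    have "(\<forall>i\<ge>n. m i + e i = 0) \<and> (\<forall>i. m i + e i \<le> D)"
      using assms mpoly_partial_ne_zeroD[OF that] unfolding mpolys_indiv_deg_le_def is_mpoly_def by blast
    then show ?thesis
      by (meson add_eq_0_iff_both_eq_0 add_leE)
  qed
  then show ?thesis
    using assms finite_support_mpoly_partial
    unfolding mpolys_indiv_deg_le_def is_mpoly_def by auto
qed

lemma mpolys_indiv_deg_le_total_degree:
  assumes "is_mpoly n f"
  shows "f \<in> mpolys_indiv_deg_le n (total_degree n f)"
proof -
  have "e i \<le> total_degree n f" if "f e \<noteq> 0" for e i
  proof (cases "i < n")
    case True
    have "finite {(\<Sum>i<n. e i) | e. f e \<noteq> 0}"
      using assms by (simp add: is_mpoly_def)
    then have "(\<Sum>i<n. e i) \<le> total_degree n f"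
      unfolding total_degree_def using that by (intro Max_ge) auto
    moreover have "e i \<le> (\<Sum>i<n. e i)"
      using True by (intro member_le_sum) auto
    ultimately show ?thesis by linarith
  qed (use assms that in \<open>auto simp: is_mpoly_def not_less\<close>)
  then show ?thesis
    using assms by (simp add: mpolys_indiv_deg_le_def)
qed

lemma mpoly_eval_superset:
  assumes "finite F" and "{e. g e \<noteq> 0} \<subseteq> F"
  shows "mpoly_eval n g y = (\<Sum>e\<in>F. g e * (\<Prod>i<n. y i ^ e i))"
  unfolding mpoly_eval_def by (rule sum.mono_neutral_left) (use assms in auto)

lemma mpoly_eval_sum:
  assumes "finite K" and "\<And>k. k \<in> K \<Longrightarrow> finite {m. h k m \<noteq> 0}"
  shows "mpoly_eval n (\<Sum>k\<in>K. h k) y = (\<Sum>k\<in>K. mpoly_eval n (h k) y)"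
proof -
  define F where "F = (\<Union>k\<in>K. {m. h k m \<noteq> 0})"
  have F: "finite F"
    using assms by (simp add: F_def)
  have "{m. (\<Sum>k\<in>K. h k) m \<noteq> 0} \<subseteq> F"
    by (auto simp: F_def sum_fun_apply dest: sum.not_neutral_contains_not_neutral)
  then have "mpoly_eval n (\<Sum>k\<in>K. h k) y = (\<Sum>m\<in>F. (\<Sum>k\<in>K. h k m) * (\<Prod>i<n. y i ^ m i))"
    by (simp add: mpoly_eval_superset[OF F] sum_fun_apply)
  also have "\<dots> = (\<Sum>k\<in>K. \<Sum>m\<in>F. h k m * (\<Prod>i<n. y i ^ m i))"
    by (simp add: sum_distrib_right sum.swap[of _ F])
  also have "\<dots> = (\<Sum>k\<in>K. mpoly_eval n (h k) y)"
    by (intro sum.cong refl mpoly_eval_superset[symmetric] F) (auto simp: F_def)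
  finally show ?thesis .
qed

lemma mpoly_eval_cscale: "mpoly_eval n (cscale a g) y = a * mpoly_eval n g y"
  by (cases "a = 0") (simp_all add: mpoly_eval_def sum_distrib_left mult.assoc)

lemma mpoly_eval_zero:
  assumes "is_mpoly n g"
  shows "mpoly_eval n g (\<lambda>_. 0) = g (\<lambda>_. 0)"
proof -
  have "g e * (\<Prod>i<n. 0 ^ e i) = (if e = (\<lambda>_. 0) then g e else 0)" if "g e \<noteq> 0" for e
  proof (cases "\<forall>i<n. e i = 0")
    case True
    have "e i = 0" for i
      using True assms that by (cases "i < n") (auto simp: is_mpoly_def)
    then have "e = (\<lambda>_. 0)"
      by blast
    then show ?thesis by simp
  next
    case False
    then show ?thesis by auto
  qed
  then have "mpoly_eval n g (\<lambda>_. 0) = (\<Sum>e | g e \<noteq> 0. if e = (\<lambda>_. 0) then g e else 0)"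
    unfolding mpoly_eval_def by (intro sum.cong) auto
  also have "\<dots> = g (\<lambda>_. 0)"
    using assms by (simp add: is_mpoly_def)
  finally show ?thesis .
qed

text \<open>The binomial coefficient vanishes exactly for the monomials \<open>x\<^sup>m\<close> of \<open>g\<close> that are killed by
  \<open>\<partial>\<^sup>e\<close>, so the formula needs no case distinction on \<open>e \<le> m\<close>.\<close>

lemma mpoly_eval_partial:
  assumes fin: "finite {m. g m \<noteq> 0}" and e: "\<forall>i\<ge>n. e i = 0"
  shows "mpoly_eval n (mpoly_partial n e g) y
    = (\<Sum>m | g m \<noteq> 0. g m * (\<Prod>i<n. of_nat (m i choose e i) * fact (e i) * y i ^ (m i - e i)))"
proof -
  let ?P = "{m. g m \<noteq> 0 \<and> (\<forall>i. e i \<le> m i)}"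
  let ?term = "\<lambda>m. g m * (\<Prod>i<n. of_nat (m i choose e i) * fact (e i) * y i ^ (m i - e i))"
  have fact_quotient: "of_nat (a + k choose k) * fact k = (fact (a + k) / fact a :: complex)" for a k
    using binomial_fact[of k "a + k"] by (simp add: field_simps)
  have "mpoly_eval n (mpoly_partial n e g) y = sum ?term ?P"
    unfolding mpoly_eval_def
  proof (rule sum.reindex_bij_witness[where j = "\<lambda>m i. m i + e i" and i = "\<lambda>m i. m i - e i"])
    fix m assume "m \<in> {m. mpoly_partial n e g m \<noteq> 0}"
    then show "(\<lambda>i. m i + e i) \<in> ?P"
      by (auto dest: mpoly_partial_ne_zeroD)
    show "?term (\<lambda>i. m i + e i) = mpoly_partial n e g m * (\<Prod>i<n. y i ^ m i)"
      by (simp add: mpoly_partial_def fact_quotient prod.distrib[symmetric] mult.assoc)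
  next
    fix m assume m: "m \<in> ?P"
    then show m_e: "(\<lambda>i. m i - e i + e i) = m"
      by auto
    show "(\<lambda>i. m i - e i) \<in> {m. mpoly_partial n e g m \<noteq> 0}"
      using m by (simp add: mpoly_partial_def m_e)
  qed simp
  also have "sum ?term ?P = sum ?term {m. g m \<noteq> 0}"
  proof -
    have "?term m = 0" if "m \<in> {m. g m \<noteq> 0} - ?P" for m
    proof -
      have "\<not> (\<forall>i. e i \<le> m i)"
        using that by auto
      then obtain i where "m i < e i"
        by (auto simp: not_le)
      moreover from this have "i < n"
        using e by (metis not_less not_less0)
      ultimately show ?thesis
        by (auto simp: binomial_eq_0 intro!: prod_zero bexI[of _ i])
    qed
    then show ?thesis
      by (intro sum.mono_neutral_left) (use fin in auto)
  qed
  finally show ?thesis .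
qed

section \<open>Hasse derivatives and Taylor shifts\<close>

definition single_exp :: "nat \<Rightarrow> nat \<Rightarrow> nat \<Rightarrow> nat" where
  "single_exp j k = (\<lambda>i. if i = j then k else 0)"

definition hasse_deriv :: "nat \<Rightarrow> nat \<Rightarrow> nat \<Rightarrow> ((nat \<Rightarrow> nat) \<Rightarrow> complex) \<Rightarrow> ((nat \<Rightarrow> nat) \<Rightarrow> complex)" where
  "hasse_deriv n j k g = cscale (1 / fact k) (mpoly_partial n (single_exp j k) g)"

lemma mpoly_partial_cscale: "mpoly_partial n e (cscale a g) = cscale a (mpoly_partial n e g)"
  by (simp add: mpoly_partial_def fun_eq_iff mult.assoc)

lemma linear_hasse_deriv: "Vector_Spaces.linear cscale cscale (hasse_deriv n j k)"
  unfolding Vector_Spaces.linear_iff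
  by (auto simp: cs.vector_space_axioms hasse_deriv_def mpoly_partial_def cscale_def algebra_simps)

lemma hasse_deriv_commute:
  "hasse_deriv n j k (hasse_deriv n j' k' g) = hasse_deriv n j' k' (hasse_deriv n j k g)"
proof -
  have "hasse_deriv n j k (hasse_deriv n j' k' g)
      = cscale (1 / fact k * (1 / fact k')) (mpoly_partial n (\<lambda>i. single_exp j k i + single_exp j' k' i) g)"
    for j k j' k'
    by (simp add: hasse_deriv_def mpoly_partial_cscale mpoly_partial_mpoly_partial)
  then show ?thesis
    by (simp add: add.commute mult.commute)
qed

lemma mpoly_eval_hasse_deriv:
  assumes fin: "finite {m. g m \<noteq> 0}" and j: "j < n"
  shows "mpoly_eval n (hasse_deriv n j k g) y
    = (\<Sum>m | g m \<noteq> 0. g m * (of_nat (m j choose k) * y j ^ (m j - k) * (\<Prod>i\<in>{..<n} - {j}. y i ^ m i)))"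
proof -
  have "(\<Prod>i<n. of_nat (m i choose single_exp j k i) * fact (single_exp j k i) * y i ^ (m i - single_exp j k i))
      = fact k * (of_nat (m j choose k) * y j ^ (m j - k) * (\<Prod>i\<in>{..<n} - {j}. y i ^ m i))" for m
    using j by (subst prod.remove[of _ j]) (auto simp: single_exp_def intro!: prod.cong)
  moreover have "\<forall>i\<ge>n. single_exp j k i = 0"
    using j by (simp add: single_exp_def)
  ultimately show ?thesis
    by (simp add: hasse_deriv_def mpoly_eval_cscale mpoly_eval_partial[OF fin] sum_distrib_left mult.assoc)
qed

definition taylor_shift :: "nat \<Rightarrow> nat \<Rightarrow> nat \<Rightarrow> complex \<Rightarrow> ((nat \<Rightarrow> nat) \<Rightarrow> complex) \<Rightarrow> ((nat \<Rightarrow> nat) \<Rightarrow> complex)" where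
  "taylor_shift n D j t g = (\<Sum>k\<le>D. cscale (t ^ k) (hasse_deriv n j k g))"

lemma binomial_ring_atMost:
  fixes a b :: "'a::comm_semiring_1"
  assumes "m \<le> D"
  shows "(a + b) ^ m = (\<Sum>k\<le>D. of_nat (m choose k) * a ^ k * b ^ (m - k))"
proof -
  have "\<forall>k\<in>{..D} - {..m}. of_nat (m choose k) * a ^ k * b ^ (m - k) = 0"
    by (auto simp: binomial_eq_0)
  then show ?thesis
    unfolding binomial_ring using assms by (intro sum.mono_neutral_left) auto
qed

lemma mpoly_eval_taylor_shift:
  assumes fin: "finite {m. g m \<noteq> 0}" and deg: "\<And>m. g m \<noteq> 0 \<Longrightarrow> m j \<le> D" and j: "j < n"
  shows "mpoly_eval n (taylor_shift n D j t g) y = mpoly_eval n g (y(j := y j + t))"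
proof -
  let ?R = "\<lambda>m. \<Prod>i\<in>{..<n} - {j}. y i ^ m i"
  have "finite {m. cscale (t ^ k) (hasse_deriv n j k g) m \<noteq> 0}" for k
    by (rule finite_subset[OF _ finite_support_mpoly_partial[OF fin]]) (auto simp: hasse_deriv_def)
  then have "mpoly_eval n (taylor_shift n D j t g) y = (\<Sum>k\<le>D. t ^ k * mpoly_eval n (hasse_deriv n j k g) y)"
    by (simp add: taylor_shift_def mpoly_eval_sum mpoly_eval_cscale)
  also have "\<dots> = (\<Sum>m | g m \<noteq> 0. g m * ((\<Sum>k\<le>D. of_nat (m j choose k) * t ^ k * y j ^ (m j - k)) * ?R m))"
    by (simp add: mpoly_eval_hasse_deriv[OF fin j] sum_distrib_left sum_distrib_right
        sum.swap[of _ "{..D}"] mult_ac)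
  also have "\<dots> = (\<Sum>m | g m \<noteq> 0. g m * ((t + y j) ^ m j * ?R m))"
  proof (intro sum.cong refl)
    fix m assume "m \<in> {m. g m \<noteq> 0}"
    then show "g m * ((\<Sum>k\<le>D. of_nat (m j choose k) * t ^ k * y j ^ (m j - k)) * ?R m)
      = g m * ((t + y j) ^ m j * ?R m)"
      using binomial_ring_atMost[OF deg, of m t "y j"] by simp
  qed
  also have "\<dots> = mpoly_eval n g (y(j := y j + t))"
    unfolding mpoly_eval_def using j
    by (intro sum.cong refl) (simp add: prod.remove[of "{..<n}" j] add.commute)
  finally show ?thesis .
qed

lemma taylor_shift_in_subspace:
  assumes "cs.subspace V" and "\<And>k h. h \<in> V \<Longrightarrow> mpoly_partial n (single_exp j k) h \<in> V" and "g \<in> V"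
  shows "taylor_shift n D j t g \<in> V"
  unfolding taylor_shift_def hasse_deriv_def
  using assms by (intro cs.subspace_sum cs.subspace_scale) auto

lemma foldr_taylor_shift_in_mpolys_indiv_deg_le:
  assumes "g \<in> mpolys_indiv_deg_le n D"
  shows "foldr (\<lambda>j. taylor_shift n D j (x j)) js g \<in> mpolys_indiv_deg_le n D"
  by (induction js)
    (auto intro: assms taylor_shift_in_subspace subspace_mpolys_indiv_deg_le mpoly_partial_in_mpolys_indiv_deg_le)

lemma mpoly_eval_foldr_taylor_shift:
  assumes "g \<in> mpolys_indiv_deg_le n D" and "distinct js" and "set js \<subseteq> {..<n}"
  shows "mpoly_eval n (foldr (\<lambda>j. taylor_shift n D j (x j)) js g) y
    = mpoly_eval n g (\<lambda>i. if i \<in> set js then y i + x i else y i)"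
  using assms(2,3)
proof (induction js arbitrary: y)
  case (Cons j js)
  let ?h = "foldr (\<lambda>j. taylor_shift n D j (x j)) js g"
  have "?h \<in> mpolys_indiv_deg_le n D"
    by (rule foldr_taylor_shift_in_mpolys_indiv_deg_le[OF assms(1)])
  then have "mpoly_eval n (taylor_shift n D j (x j) ?h) y = mpoly_eval n ?h (y(j := y j + x j))"
    using Cons.prems by (intro mpoly_eval_taylor_shift) (auto simp: mpolys_indiv_deg_le_def is_mpoly_def)
  also have "\<dots> = mpoly_eval n g (\<lambda>i. if i \<in> set (j # js) then y i + x i else y i)"
    using Cons by (auto intro!: arg_cong[where f = "mpoly_eval n g"])
  finally show ?case by simp
qed simp

lemma foldr_taylor_shift_at_zero:
  assumes "g \<in> mpolys_indiv_deg_le n D"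
  shows "foldr (\<lambda>j. taylor_shift n D j (x j)) [0..<n] g (\<lambda>_. 0) = mpoly_eval n g x"
proof -
  have "foldr (\<lambda>j. taylor_shift n D j (x j)) [0..<n] g (\<lambda>_. 0)
      = mpoly_eval n (foldr (\<lambda>j. taylor_shift n D j (x j)) [0..<n] g) (\<lambda>_. 0)"
    using foldr_taylor_shift_in_mpolys_indiv_deg_le[OF assms]
    by (simp add: mpoly_eval_zero mpolys_indiv_deg_le_def)
  also have "\<dots> = mpoly_eval n g (\<lambda>i. if i \<in> set [0..<n] then 0 + x i else 0)"
    using assms by (intro mpoly_eval_foldr_taylor_shift) auto
  also have "\<dots> = mpoly_eval n g x"
    unfolding mpoly_eval_def by (intro sum.cong refl arg_cong2[where f = "(*)"] prod.cong) auto
  finally show ?thesis .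
qed

section \<open>A commutative ROABP of width DPD\<close>

definition partial_derivs :: "nat \<Rightarrow> ((nat \<Rightarrow> nat) \<Rightarrow> complex) \<Rightarrow> ((nat \<Rightarrow> nat) \<Rightarrow> complex) set" where
  "partial_derivs n f = {mpoly_partial n e f | e. \<forall>i\<ge>n. e i = 0}"

lemma finite_partial_derivs:
  assumes "is_mpoly n f"
  shows "finite (partial_derivs n f)"
proof -
  define D where "D = total_degree n f"
  define Box where "Box = {e :: nat \<Rightarrow> nat. \<forall>i. (i \<in> {..<n} \<longrightarrow> e i \<in> {..D}) \<and> (i \<notin> {..<n} \<longrightarrow> e i = 0)}"
  have "finite Box"
    unfolding Box_def by (rule finite_set_of_finite_funs) auto
  moreover have "partial_derivs n f \<subseteq> insert 0 ((\<lambda>e. mpoly_partial n e f) ` Box)"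
  proof
    fix g assume "g \<in> partial_derivs n f"
    then obtain e where g: "g = mpoly_partial n e f" and e: "\<forall>i\<ge>n. e i = 0"
      by (auto simp: partial_derivs_def)
    show "g \<in> insert 0 ((\<lambda>e. mpoly_partial n e f) ` Box)"
    proof (cases "e \<in> Box")
      case False
      then obtain i where i: "e i > D"
        using e by (auto simp: Box_def not_le)
      have "g m = 0" for m
      proof (rule ccontr)
        assume "g m \<noteq> 0"
        then have "f (\<lambda>i. m i + e i) \<noteq> 0"
          unfolding g by (rule mpoly_partial_ne_zeroD)
        then have "m i + e i \<le> D"
          using mpolys_indiv_deg_le_total_degree[OF assms] by (auto simp: D_def mpolys_indiv_deg_le_def)
        with i show False by simp
      qed
      then show ?thesis by auto
    qed (auto simp: g)
  qed
  ultimately show ?thesis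
    by (simp add: finite_subset)
qed

lemma mpoly_partial_in_span_partial_derivs:
  assumes "g \<in> cs.span (partial_derivs n f)" and "\<forall>i\<ge>n. e i = 0"
  shows "mpoly_partial n e g \<in> cs.span (partial_derivs n f)"
proof -
  interpret d: Vector_Spaces.linear cscale cscale "mpoly_partial n e"
    by (rule linear_mpoly_partial)
  have "mpoly_partial n e ` partial_derivs n f \<subseteq> partial_derivs n f"
    using assms(2) by (force simp: partial_derivs_def mpoly_partial_mpoly_partial)
  then have "cs.span (mpoly_partial n e ` partial_derivs n f) \<subseteq> cs.span (partial_derivs n f)"
    by (rule cs.span_mono)
  then show ?thesis
    using assms(1) d.span_image by blast
qed

lemma linear_taylor_shift: "Vector_Spaces.linear cscale cscale (taylor_shift n D j t)"
  by (auto simp: Vector_Spaces.linear_iff cs.vector_space_axioms taylor_shift_def hasse_deriv_def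
      mpoly_partial_def fun_eq_iff sum_fun_apply sum.distrib sum_distrib_left algebra_simps)

lemma linear_eval_at: "Vector_Spaces.linear cscale (*) (\<lambda>g. g z)"
  by (simp add: Vector_Spaces.linear_iff cs.vector_space_axioms vector_space_mult)

lemma comm_roabp_computes_of_invariant_span:
  assumes f: "is_mpoly n f"
    and B: "finite B" "cs.independent B" "f \<in> cs.span B"
    and closed: "\<And>g j k. g \<in> cs.span B \<Longrightarrow> j < n \<Longrightarrow> mpoly_partial n (single_exp j k) g \<in> cs.span B"
  shows "comm_roabp_computes n (card B) f"
proof -
  define D where "D = total_degree n f"
  obtain \<phi> where "bij_betw \<phi> {0..<card B} B"
    using ex_bij_betw_nat_finite[OF B(1)] by blast
  then interpret E: enumerated_basis cscale B \<phi> "card B"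
    by unfold_locales (simp_all add: B(2))
  define A where "A j k = E.matrix_of (hasse_deriv n j k)" for j k
  define u where "u = vec (card B) (\<lambda>a. \<phi> a (\<lambda>_. 0))"
  have hasse_span: "hasse_deriv n j k ` cs.span B \<subseteq> cs.span B" if "j < n" for j k
    using closed that by (auto simp: hasse_deriv_def intro: cs.span_scale)
  have taylor_span: "taylor_shift n D j t ` cs.span B \<subseteq> cs.span B" if "j < n" for j t
    using closed that by (auto intro: taylor_shift_in_subspace)
  have layer: "roabp_layer (card B) D A j t = E.matrix_of (taylor_shift n D j t)" if "j < n" for j t
    using E.matrix_of_lincomb[OF hasse_span[OF that], where K = "{..D}" and t = "\<lambda>k. t ^ k"]
    by (simp add: roabp_layer_def A_def taylor_shift_def[abs_def])
  have "mpoly_eval n f x = roabp_value n (card B) D id A u (E.coord f) x" for x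
  proof -
    let ?shifts = "foldr (\<lambda>j. taylor_shift n D j (x j)) [0..<n]"
    have "map (\<lambda>j. roabp_layer (card B) D A j (x j)) [0..<n]
      = map (\<lambda>j. E.matrix_of (taylor_shift n D j (x j))) [0..<n]"
      by (rule map_cong[OF refl]) (simp add: layer)
    then have "roabp_value n (card B) D id A u (E.coord f) x
      = u \<bullet>
          (foldr (*) (map (\<lambda>j. E.matrix_of (taylor_shift n D j (x j))) [0..<n]) (1\<^sub>m (card B)) *\<^sub>v E.coord f)"
      by (simp only: roabp_value_def id_apply)
    also have "\<dots> = u \<bullet> E.coord (?shifts f)"
      using taylor_span by (subst E.matrix_of_foldr_mult_coord) (auto simp: B(3) linear_taylor_shift)
    also have "\<dots> = ?shifts f (\<lambda>_. 0)"
      unfolding u_def using taylor_span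
      by (intro E.scalar_prod_coord linear_eval_at E.foldr_in_span) (auto simp: B(3))
    also have "\<dots> = mpoly_eval n f x"
      using mpolys_indiv_deg_le_total_degree[OF f] by (simp add: D_def foldr_taylor_shift_at_zero)
    finally show ?thesis by simp
  qed
  moreover have "A j k * A j' k' = A j' k' * A j k" if "j < n" "j' < n" for j k j' k'
    using E.matrix_of_comp[OF linear_hasse_deriv hasse_span[OF that(1)] hasse_span[OF that(2)]]
      E.matrix_of_comp[OF linear_hasse_deriv hasse_span[OF that(2)] hasse_span[OF that(1)]]
    by (simp add: A_def comp_def hasse_deriv_commute)
  ultimately show ?thesis
    unfolding comm_roabp_computes_def
    by (intro exI[of _ D] exI[of _ id] exI[of _ A] exI[of _ u] exI[of _ "E.coord f"])
      (auto simp: A_def u_def)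
qed

theorem comm_roabp_computes_DPD:
  assumes "is_mpoly n f"
  shows "comm_roabp_computes n (DPD n f) f"
proof -
  obtain B where B: "B \<subseteq> partial_derivs n f" "cs.independent B" "partial_derivs n f \<subseteq> cs.span B"
      "card B = DPD n f"
    using cs.basis_exists unfolding DPD_def partial_derivs_def by blast
  have span_B: "cs.span B = cs.span (partial_derivs n f)"
    using B(1,3) cs.span_eq cs.span_superset by blast
  have "f \<in> partial_derivs n f"
    unfolding partial_derivs_def by (rule CollectI, rule exI[of _ "\<lambda>_. 0"]) simp
  moreover have "finite B"
    using B(1) finite_partial_derivs[OF assms] by (rule finite_subset)
  ultimately have "comm_roabp_computes n (card B) f"
    using B(3) mpoly_partial_in_span_partial_derivs
    by (intro comm_roabp_computes_of_invariant_span[OF assms _ B(2)])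
      (auto simp: span_B single_exp_def)
  then show ?thesis
    by (simp add: B(4))
qed

theorem corollary1p5:
  fixes n d :: nat and f :: "(nat \<Rightarrow> nat) \<Rightarrow> complex"
  assumes "is_mpoly n f"
    and "total_degree n f = d"
  shows "commRO n f \<le> (d + 1)^2 * DPD n f"
proof -
  \<comment> \<open>The width is \<open>DPD n f\<close> itself.\<close>
  have "commRO n f \<le> DPD n f"
    unfolding commRO_def by (rule Least_le) (rule comm_roabp_computes_DPD[OF assms(1)])
  also have "\<dots> \<le> (d + 1)^2 * DPD n f"
    by simp
  finally show ?thesis .
qed

end
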